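(* Assume the setting below (in particular that $\mu^c_{J}$ concentrates on $\mathcal{B}$). For each $n$, the unique stationary distribution on $\mathcal{B}_n$ of the long-range Kawasaki dynamics is $$\nu^n_{J,\beta,q}(\sigma)= \mu^c_{J}(\sigma\mid N(\sigma)=n)= \frac{\mu^c_J(\sigma)\mathbb{1}_{\{N(\sigma)=n\}}}{\mu^c_J(\{N=n\})}.$$
   Context: Let $c\in\mathbb{R}$, $\beta\geq0$, $q\in(0,1)$ and $J:\mathbb{Z}\times\mathbb{Z}\to\mathbb{R}$ with $J(i,j)=J(j,i)\geq0$, $J(i,i)=0$. Spin configurations are $\sigma\in\{-1,+1\}^{\mathbb{Z}}$; $\mathcal{B}$ is the set of configurations for which there exist $a,b\in\mathbb{Z}$ with $\sigma_{a-i}=-1$, $\sigma_{b+i}=+1$ for all $i\in\mathbb{N}$. $H_J(\sigma)=\frac12\sum_{i,j}J(i,j)\mathbb{1}_{\{\sigma_i\neq\sigma_j\}}$, $f_c(\sigma)=2\sum_{i=1}^\infty(i-c)\mathbb{1}_{\{\sigma_i=-1\}}-2\sum_{i=-\infty}^0(i-c)\mathbb{1}_{\{\sigma_i=1\}}$, $\mu^c_J(\sigma)\propto e^{-\beta H_J(\sigma)}q^{f_c(\sigma)}$, assumed concentrated on $\mathcal{B}$. For $\sigma\in\mathcal{B}$, $N(\sigma)=\#\{i\geq1:\sigma_i=-1\}-\#\{i\leq 0:\sigma_i=+1\}$ and $\mathcal{B}_n=\{\sigma\in\mathcal{B}:N(\sigma)=n\}$. Dynamics: if $\sigma'$ agrees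 with $\sigma$ except at sites $k,\ell$ where $\sigma_k=1,\sigma_\ell=-1$, $\sigma'_k=-1,\sigma'_\ell=1$, then $\sigma\to\sigma'$ at rate $\frac12 q^{k-\ell}\big(1-\tanh\big(\frac{\beta}{2}\sum_{i\neq \ell,k}(J(i,k)\sigma_k\sigma_i + J(i,\ell)\sigma_\ell\sigma_i)\big)\big)$; other transitions have rate $0$. These dynamics preserve $N$. *)

theory Defs
  imports "HOL-Analysis.Analysis"
begin

definition spin_configs :: "(int \<Rightarrow> int) set" where
  "spin_configs = {\<sigma>. \<forall>i. \<sigma> i = -1 \<or> \<sigma> i = 1}"

definition Bset :: "(int \<Rightarrow> int) set" where
  "Bset = {\<sigma> \<in> spin_configs. \<exists>a b. \<forall>i::nat. i \<ge> 1 \<longrightarrow> \<sigma> (a - int i) = -1 \<and> \<sigma> (b + int i) = 1}"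

definition hamiltonian :: "(int \<Rightarrow> int \<Rightarrow> real) \<Rightarrow> (int \<Rightarrow> int) \<Rightarrow> real" where
  "hamiltonian J \<sigma> = (1/2) * (\<Sum>\<^sub>\<infinity>(i,j)\<in>UNIV. J i j * (if \<sigma> i \<noteq> \<sigma> j then 1 else 0))"

definition f_c :: "real \<Rightarrow> (int \<Rightarrow> int) \<Rightarrow> real" where
  "f_c c \<sigma> = 2 * (\<Sum>\<^sub>\<infinity>i\<in>{1..}. (real_of_int i - c) * (if \<sigma> i = -1 then 1 else 0))
             - 2 * (\<Sum>\<^sub>\<infinity>i\<in>{..0}. (real_of_int i - c) * (if \<sigma> i = 1 then 1 else 0))"

definition gibbs_weight :: "(int \<Rightarrow> int \<Rightarrow> real) \<Rightarrow> real \<Rightarrow> real \<Rightarrow> real \<Rightarrow> (int \<Rightarrow> int) \<Rightarrow> real" where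
  "gibbs_weight J \<beta> q c \<sigma> = exp (- \<beta> * hamiltonian J \<sigma>) * q powr (f_c c \<sigma>)"

text \<open>"mu^c_J is concentrated on B": the Hamiltonian is finite (summable) on every
  configuration of B, and the Gibbs weights over B have a finite positive total mass.\<close>
definition concentrated_on_B :: "(int \<Rightarrow> int \<Rightarrow> real) \<Rightarrow> real \<Rightarrow> real \<Rightarrow> real \<Rightarrow> bool" where
  "concentrated_on_B J \<beta> q c \<longleftrightarrow>
     (\<forall>\<sigma>\<in>Bset. (\<lambda>(i,j). J i j * (if \<sigma> i \<noteq> \<sigma> j then 1 else 0)) summable_on UNIV) \<and>
     gibbs_weight J \<beta> q c summable_on Bset \<and>
     (\<Sum>\<^sub>\<infinity>\<sigma>\<in>Bset. gibbs_weight J \<beta> q c \<sigma>) > 0"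

text \<open>The probability measure mu^c_J on B (point masses).\<close>
definition mu :: "(int \<Rightarrow> int \<Rightarrow> real) \<Rightarrow> real \<Rightarrow> real \<Rightarrow> real \<Rightarrow> (int \<Rightarrow> int) \<Rightarrow> real" where
  "mu J \<beta> q c \<sigma> = (if \<sigma> \<in> Bset
     then gibbs_weight J \<beta> q c \<sigma> / (\<Sum>\<^sub>\<infinity>\<tau>\<in>Bset. gibbs_weight J \<beta> q c \<tau>) else 0)"

text \<open>The conserved quantity N and the sets B_n.\<close>
definition Ncount :: "(int \<Rightarrow> int) \<Rightarrow> int" where
  "Ncount \<sigma> = int (card {i::int. i \<ge> 1 \<and> \<sigma> i = -1}) - int (card {i::int. i \<le> 0 \<and> \<sigma> i = 1})"

definition Bn :: "int \<Rightarrow> (int \<Rightarrow> int) set" where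
  "Bn n = {\<sigma> \<in> Bset. Ncount \<sigma> = n}"

definition nu :: "(int \<Rightarrow> int \<Rightarrow> real) \<Rightarrow> real \<Rightarrow> real \<Rightarrow> real \<Rightarrow> int \<Rightarrow> (int \<Rightarrow> int) \<Rightarrow> real" where
  "nu J \<beta> q c n \<sigma> = mu J \<beta> q c \<sigma> * (if Ncount \<sigma> = n then 1 else 0)
                      / (\<Sum>\<^sub>\<infinity>\<tau>\<in>Bn n. mu J \<beta> q c \<tau>)"

definition swap_spins :: "(int \<Rightarrow> int) \<Rightarrow> int \<Rightarrow> int \<Rightarrow> (int \<Rightarrow> int)" where
  "swap_spins \<sigma> k l = \<sigma>(k := -1, l := 1)"

definition move_rate :: "(int \<Rightarrow> int \<Rightarrow> real) \<Rightarrow> real \<Rightarrow> real \<Rightarrow> (int \<Rightarrow> int) \<Rightarrow> int \<Rightarrow> int \<Rightarrow> real" where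
  "move_rate J \<beta> q \<sigma> k l = (1/2) * q powr (real_of_int (k - l)) *
     (1 - tanh ((\<beta> / 2) * (\<Sum>\<^sub>\<infinity>i\<in>UNIV - {l, k}.
        J i k * real_of_int (\<sigma> k * \<sigma> i) + J i l * real_of_int (\<sigma> l * \<sigma> i))))"

text \<open>Transition rate sigma -> sigma' of the long-range Kawasaki dynamics
  (the pair (k,l) is uniquely determined by sigma and sigma').\<close>
definition kawasaki_rate :: "(int \<Rightarrow> int \<Rightarrow> real) \<Rightarrow> real \<Rightarrow> real \<Rightarrow> (int \<Rightarrow> int) \<Rightarrow> (int \<Rightarrow> int) \<Rightarrow> real" where
  "kawasaki_rate J \<beta> q \<sigma> \<sigma>' =
     (if \<exists>k l. \<sigma> k = 1 \<and> \<sigma> l = -1 \<and> \<sigma>' = swap_spins \<sigma> k l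
      then (case (SOME (k, l). \<sigma> k = 1 \<and> \<sigma> l = -1 \<and> \<sigma>' = swap_spins \<sigma> k l) of
              (k, l) \<Rightarrow> move_rate J \<beta> q \<sigma> k l)
      else 0)"

text \<open>Stationarity (global balance) of a distribution p on a countable state space S
  for a continuous-time Markov chain with rates r: total rate out of each state is finite
  and the probability flux into each state equals the flux out of it.\<close>
definition stationary_on :: "('s set) \<Rightarrow> ('s \<Rightarrow> 's \<Rightarrow> real) \<Rightarrow> ('s \<Rightarrow> real) \<Rightarrow> bool" where
  "stationary_on S r p \<longleftrightarrow>
     (\<forall>y\<in>S. r y summable_on (S - {y}) \<and>
        ((\<lambda>x. p x * r x y) has_sum (p y * (\<Sum>\<^sub>\<infinity>z\<in>S - {y}. r y z))) (S - {y}))"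

definition prob_dist_on :: "('s set) \<Rightarrow> ('s \<Rightarrow> real) \<Rightarrow> bool" where
  "prob_dist_on S p \<longleftrightarrow> (\<forall>x\<in>S. p x \<ge> 0) \<and> (p has_sum 1) S"

end

theory Submission
  imports Defs
begin

text \<open>On \<open>Bn n\<close> the measure \<open>\<nu>\<close> is a constant multiple of the Gibbs weight
  \<open>exp (- \<beta> * H) * q powr f_c\<close>, and the Kawasaki rates are reversible for it: exchanging a
  \<open>+\<close> spin at \<open>k\<close> with a \<open>-\<close> spin at \<open>l\<close> multiplies the weight by
  \<open>exp (- \<beta> * \<Delta>) * q powr (2 * (k - l))\<close>, which the factors \<open>q powr (k - l)\<close> and
  \<open>1 - tanh (\<beta> * \<Delta> / 2)\<close> of the forward and backward rates exactly compensate. Detailed balance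
  gives stationarity. For uniqueness, the density \<open>p / \<nu>\<close> of any stationary distribution is
  harmonic for the symmetric conductances \<open>\<nu> x * r x y\<close>. Their total mass is finite: writing
  \<open>G\<close> for the displacement from the step configuration, at fixed \<open>N\<close> the weight decays like
  \<open>q powr (2 * G)\<close> while the exit rate grows at most like \<open>q powr - G\<close>, and \<open>\<Sum> q powr G\<close>
  is at most \<open>(\<Prod>i. 1 + q ^ i)\<^sup>2 \<le> exp (2 / (1 - q))\<close>. A Liouville argument with truncations of the
  density then makes it constant along every transition, and every configuration in \<open>Bn n\<close> is
  joined to the step configuration by exchanges that decrease \<open>G\<close>.\<close>

section \<open>Elementary sums\<close>

lemma summable_on_diff_real:
  fixes f g :: "'a \<Rightarrow> real"
  assumes "f summable_on A" "g summable_on A"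
  shows "(\<lambda>x. f x - g x) summable_on A"
  using summable_on_add[OF assms(1) summable_on_uminus[THEN iffD2, OF assms(2)]] by simp

lemma infsum_diff_real:
  fixes f g :: "'a \<Rightarrow> real"
  assumes "f summable_on A" "g summable_on A"
  shows "(\<Sum>\<^sub>\<infinity>x\<in>A. f x - g x) = infsum f A - infsum g A"
  using infsum_add[OF assms(1) summable_on_uminus[THEN iffD2, OF assms(2)]]
  by (simp add: infsum_uminus)

lemma summable_on_mult_bounded_real:
  fixes f g :: "'a \<Rightarrow> real"
  assumes "f summable_on A" and "\<And>x. x \<in> A \<Longrightarrow> \<bar>g x\<bar> \<le> M"
  shows "(\<lambda>x. f x * g x) summable_on A"
proof -
  have "(\<lambda>x. norm (M * f x)) summable_on A"
    using summable_on_iff_abs_summable_on_real[THEN iffD1,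
        OF summable_on_cmult_right[OF assms(1)]] .
  then have "(\<lambda>x. norm (f x * g x)) summable_on A"
  proof (rule Infinite_Sum.abs_summable_on_comparison_test)
    fix x assume "x \<in> A"
    then have "\<bar>f x\<bar> * \<bar>g x\<bar> \<le> \<bar>f x\<bar> * \<bar>M\<bar>"
      using assms(2) by (intro mult_left_mono) fastforce+
    then show "norm (f x * g x) \<le> norm (M * f x)"
      by (simp add: abs_mult mult.commute)
  qed
  then show ?thesis
    using summable_on_iff_abs_summable_on_real[of "\<lambda>x. f x * g x" A] by simp
qed

lemma infsum_antisymmetric_eq_0:
  fixes F :: "'a \<times> 'a \<Rightarrow> real"
  assumes "\<And>x y. x \<in> S \<Longrightarrow> y \<in> S \<Longrightarrow> F (y, x) = - F (x, y)"
  shows "infsum F (S \<times> S) = 0"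
proof -
  have "bij_betw prod.swap (S \<times> S) (S \<times> S)"
    by (rule bij_betwI[of _ _ _ prod.swap]) auto
  then have "infsum F (S \<times> S) = infsum (\<lambda>(x, y). F (y, x)) (S \<times> S)"
    using infsum_reindex_bij_betw[of prod.swap "S \<times> S" "S \<times> S" F]
    by (simp add: case_prod_unfold prod.swap_def)
  also have "\<dots> = infsum (\<lambda>p. - F p) (S \<times> S)"
  proof (rule infsum_cong)
    fix p assume "p \<in> S \<times> S"
    then obtain x y where "p = (x, y)" "x \<in> S" "y \<in> S" by blast
    then show "(case p of (x, y) \<Rightarrow> F (y, x)) = - F p"
      using assms[of x y] by simp
  qed
  finally show ?thesis
    by (simp add: infsum_uminus)
qed

lemma infsum_symmetric_cross_kernel:
  fixes D :: "'a \<Rightarrow> 'a \<Rightarrow> real"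
  assumes sym: "\<And>i j. D i j = D j i"
    and cross: "\<And>i j. (i \<in> {k, l}) = (j \<in> {k, l}) \<Longrightarrow> D i j = 0" and kl: "k \<noteq> l"
    and rows: "\<And>i. D i summable_on UNIV" and row_sums: "(\<lambda>i. \<Sum>\<^sub>\<infinity>j. D i j) summable_on UNIV"
  shows "(\<Sum>\<^sub>\<infinity>i. \<Sum>\<^sub>\<infinity>j. D i j) = 2 * (\<Sum>\<^sub>\<infinity>i\<in>UNIV - {k, l}. D i k + D i l)"
proof -
  define E where "E i = (\<Sum>\<^sub>\<infinity>j. D i j)" for i
  have row: "E i = (\<Sum>\<^sub>\<infinity>j\<in>UNIV - {k, l}. D i j)" if "i \<in> {k, l}" for i
    unfolding E_def by (rule infsum_cong_neutral) (use that cross in auto)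
  have "(\<Sum>\<^sub>\<infinity>i. E i) = (\<Sum>\<^sub>\<infinity>i\<in>{k, l}. E i) + (\<Sum>\<^sub>\<infinity>i\<in>UNIV - {k, l}. E i)"
    using infsum_Un_disjoint[of E "{k, l}" "UNIV - {k, l}"] row_sums
    by (simp add: E_def[abs_def] summable_on_subset_banach)
  also have "(\<Sum>\<^sub>\<infinity>i\<in>{k, l}. E i) = (\<Sum>\<^sub>\<infinity>j\<in>UNIV - {k, l}. D k j + D l j)"
    using kl row
      infsum_add[OF summable_on_subset_banach[OF rows] summable_on_subset_banach[OF rows]]
    by simp
  also have "\<dots> = (\<Sum>\<^sub>\<infinity>i\<in>UNIV - {k, l}. D i k + D i l)"
    by (simp add: sym)
  also have "(\<Sum>\<^sub>\<infinity>i\<in>UNIV - {k, l}. E i) = (\<Sum>\<^sub>\<infinity>i\<in>UNIV - {k, l}. D i k + D i l)"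
  proof (rule infsum_cong)
    fix i assume i: "i \<in> UNIV - {k, l}"
    then have "E i = (\<Sum>\<^sub>\<infinity>j\<in>{k, l}. D i j)"
      unfolding E_def by (intro infsum_cong_neutral) (auto intro: cross)
    then show "E i = D i k + D i l"
      using kl by simp
  qed
  finally show ?thesis
    by (simp add: E_def)
qed

lemma sum_Diff_Un_singleton:
  fixes f :: "'a \<Rightarrow> 'b::ab_group_add"
  assumes "finite A" "k \<notin> A" "k \<noteq> l"
  shows "sum f ((A - {l}) \<union> ({k} \<inter> P)) =
    sum f A - (if l \<in> A then f l else 0) + (if k \<in> P then f k else 0)"
proof -
  have "sum f ((A - {l}) \<union> ({k} \<inter> P)) = sum f (A - {l}) + sum f ({k} \<inter> P)"
    by (rule sum.union_disjoint) (use assms in auto)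
  also have "sum f ({k} \<inter> P) = (if k \<in> P then f k else 0)"
    by (cases "k \<in> P") auto
  finally show ?thesis
    using assms(1) by (simp add: sum_diff1)
qed

lemma sum_powr_int_le:
  fixes K :: "int set" and q :: real
  assumes "finite K" "\<And>k. k \<in> K \<Longrightarrow> a \<le> k" "0 < q" "q < 1"
  shows "(\<Sum>k\<in>K. q powr real_of_int k) \<le> q powr real_of_int a / (1 - q)"
proof -
  have shift: "q powr real_of_int k = q powr real_of_int a * q ^ nat (k - a)" if "k \<in> K" for k
  proof -
    have "q powr real_of_int k = q powr (real_of_int a + real (nat (k - a)))"
      using assms(2)[OF that] by simp
    then show ?thesis
      using assms(3) by (simp add: powr_add powr_realpow)
  qed
  have inj: "inj_on (\<lambda>k. nat (k - a)) K"
  proof (rule inj_onI)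
    fix u v assume "u \<in> K" "v \<in> K" "nat (u - a) = nat (v - a)"
    then show "u = v"
      using assms(2)[OF \<open>u \<in> K\<close>] assms(2)[OF \<open>v \<in> K\<close>] by (simp add: eq_nat_nat_iff)
  qed
  have "(\<Sum>k\<in>K. q powr real_of_int k) = q powr real_of_int a * (\<Sum>n\<in>(\<lambda>k. nat (k - a)) ` K. q ^ n)"
    by (simp add: shift sum_distrib_left sum.reindex[OF inj])
  also have "(\<Sum>n\<in>(\<lambda>k. nat (k - a)) ` K. q ^ n) \<le> (\<Sum>n. q ^ n)"
    by (rule sum_le_suminf) (use assms in \<open>auto intro: summable_geometric\<close>)
  also have "(\<Sum>n. q ^ n) = 1 / (1 - q)"
    using assms by (simp add: suminf_geometric)
  finally show ?thesis
    using assms(3) by (simp add: mult_left_mono)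
qed

lemma sum_powr_subset_sums_le:
  fixes e :: "'a \<Rightarrow> int" and q :: real
  assumes inj: "inj_on e I" and nn: "\<forall>i\<in>I. e i \<ge> 0" and fin: "finite FF"
    and FF: "\<forall>F\<in>FF. finite F \<and> F \<subseteq> I" and q: "0 < q" "q < 1"
  shows "(\<Sum>F\<in>FF. q powr real_of_int (\<Sum>i\<in>F. e i)) \<le> exp (1 / (1 - q))"
proof -
  define U where "U = \<Union>FF"
  have finU: "finite U" and UI: "U \<subseteq> I"
    using fin FF by (auto simp: U_def)
  have "(\<Sum>F\<in>FF. q powr real_of_int (\<Sum>i\<in>F. e i))
      \<le> (\<Sum>F\<in>Pow U. q powr real_of_int (\<Sum>i\<in>F. e i))"
    by (rule sum_mono2) (use finU in \<open>auto simp: U_def\<close>)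
  also have "\<dots> = (\<Sum>F\<in>Pow U. (\<Prod>i\<in>F. q powr real_of_int (e i)))"
    using q by (intro sum.cong refl) (simp add: powr_sum)
  also have "\<dots> = (\<Prod>i\<in>U. q powr real_of_int (e i) + 1)"
    using prod_add[OF finU, of "\<lambda>i. q powr real_of_int (e i)" "\<lambda>_. 1"] by simp
  also have "\<dots> \<le> (\<Prod>i\<in>U. exp (q powr real_of_int (e i)))"
    by (rule prod_mono) (auto simp: add.commute)
  also have "\<dots> = exp (\<Sum>i\<in>U. q powr real_of_int (e i))"
    by (simp add: exp_sum[OF finU])
  also have "(\<Sum>i\<in>U. q powr real_of_int (e i)) = (\<Sum>k\<in>e ` U. q powr real_of_int k)"
    using inj UI by (simp add: sum.reindex inj_on_subset)
  also have "exp \<dots> \<le> exp (q powr real_of_int 0 / (1 - q))"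
    by (subst exp_le_cancel_iff, rule sum_powr_int_le) (use finU q nn UI in auto)
  finally show ?thesis
    using q by simp
qed

lemma one_minus_tanh_eq: "1 - tanh (t::real) = exp (- 2 * t) * (1 + tanh t)"
proof -
  define e where "e = exp (- 2 * t)"
  have "e > 0"
    by (simp add: e_def)
  then show ?thesis
    unfolding tanh_real_altdef e_def[symmetric] by (simp add: field_simps)
qed

section \<open>Reversible chains on countable state spaces\<close>

text \<open>The outflows \<open>\<Sum>y. c x y * (u y - u x)\<close> are nonpositive and add up to the total flux,
  which vanishes by antisymmetry.\<close>

lemma superharmonic_bounded_imp_harmonic:
  fixes c :: "'a \<Rightarrow> 'a \<Rightarrow> real" and u :: "'a \<Rightarrow> real"
  assumes sym: "\<And>x y. x \<in> S \<Longrightarrow> y \<in> S \<Longrightarrow> c x y = c y x"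
    and c_summable: "(\<lambda>(x, y). c x y) summable_on S \<times> S"
    and u_bounded: "\<And>x. x \<in> S \<Longrightarrow> \<bar>u x\<bar> \<le> M"
    and superharmonic: "\<And>x. x \<in> S \<Longrightarrow> (\<Sum>\<^sub>\<infinity>y\<in>S. c x y * (u y - u x)) \<le> 0"
    and x: "x \<in> S"
  shows "(\<Sum>\<^sub>\<infinity>y\<in>S. c x y * (u y - u x)) = 0"
proof -
  define F where "F a b = c a b * (u b - u a)" for a b
  define g where "g a = (\<Sum>\<^sub>\<infinity>b\<in>S. F a b)" for a
  have "(\<lambda>p. c (fst p) (snd p) * (u (snd p) - u (fst p))) summable_on S \<times> S"
  proof (rule summable_on_mult_bounded_real)
    show "(\<lambda>p. c (fst p) (snd p)) summable_on S \<times> S"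
      using c_summable by (simp add: case_prod_unfold)
    show "\<bar>u (snd p) - u (fst p)\<bar> \<le> 2 * M" if "p \<in> S \<times> S" for p
      using u_bounded[of "fst p"] u_bounded[of "snd p"] that by fastforce
  qed
  then have F_summable: "(\<lambda>(a, b). F a b) summable_on S \<times> S"
    by (simp add: F_def case_prod_unfold)
  have "(\<Sum>\<^sub>\<infinity>a\<in>S. g a) = (\<Sum>\<^sub>\<infinity>(a, b)\<in>S \<times> S. F a b)"
    using infsum_Sigma'_banach[OF F_summable] by (simp add: g_def)
  also have "\<dots> = 0"
  proof (rule infsum_antisymmetric_eq_0)
    fix a b assume "a \<in> S" "b \<in> S"
    then show "(case (b, a) of (a, b) \<Rightarrow> F a b) = - (case (a, b) of (a, b) \<Rightarrow> F a b)"
      by (simp add: F_def sym[of b a] algebra_simps)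
  qed
  finally have "(\<Sum>\<^sub>\<infinity>a\<in>S. - g a) \<le> 0"
    by (simp add: infsum_uminus)
  moreover have "(\<lambda>a. - g a) summable_on S"
    using summable_on_Sigma_banach[OF F_summable] summable_on_uminus by (force simp: g_def)
  moreover have "- g a \<ge> 0" if "a \<in> S" for a
    using superharmonic[OF that] by (simp add: g_def F_def)
  ultimately have "- g x = 0"
    using nonneg_infsum_le_0D[of "\<lambda>a. - g a" S x] x by blast
  then show ?thesis
    by (simp add: g_def F_def)
qed

lemma truncation_superharmonic:
  fixes c :: "'a \<Rightarrow> 'a \<Rightarrow> real" and h :: "'a \<Rightarrow> real"
  assumes c_nonneg: "\<And>b. b \<in> S \<Longrightarrow> c a b \<ge> 0" and c_summable: "c a summable_on S"
    and h_nonneg: "\<And>b. b \<in> S \<Longrightarrow> h b \<ge> 0" and M: "M \<ge> 0"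
    and harmonic: "((\<lambda>b. c a b * h b) has_sum (h a * (\<Sum>\<^sub>\<infinity>b\<in>S. c a b))) S"
    and a: "a \<in> S"
  shows "(\<lambda>b. c a b * (min (h b) M - min (h a) M)) summable_on S" (is "?F summable_on S")
    and "(\<Sum>\<^sub>\<infinity>b\<in>S. c a b * (min (h b) M - min (h a) M)) \<le> 0"
proof -
  show F_summable: "?F summable_on S"
  proof (rule summable_on_mult_bounded_real[OF c_summable])
    fix b assume "b \<in> S"
    then show "\<bar>min (h b) M - min (h a) M\<bar> \<le> M"
      using h_nonneg[of b] h_nonneg[OF a] M by (simp add: abs_le_iff min_def)
  qed
  show "(\<Sum>\<^sub>\<infinity>b\<in>S. c a b * (min (h b) M - min (h a) M)) \<le> 0"
  proof (cases "h a \<le> M")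
    case True
    have ch: "(\<lambda>b. c a b * h b) summable_on S"
      using harmonic by (auto simp: summable_on_def)
    have ca: "(\<lambda>b. c a b * h a) summable_on S"
      using summable_on_cmult_left[OF c_summable] .
    have "(\<Sum>\<^sub>\<infinity>b\<in>S. ?F b) \<le> (\<Sum>\<^sub>\<infinity>b\<in>S. c a b * h b - c a b * h a)"
    proof (rule infsum_mono[OF F_summable summable_on_diff_real[OF ch ca]])
      fix b assume b: "b \<in> S"
      have "min (h b) M - min (h a) M \<le> h b - h a"
        using True by simp
      then have "?F b \<le> c a b * (h b - h a)"
        using c_nonneg[OF b] by (rule mult_left_mono)
      then show "?F b \<le> c a b * h b - c a b * h a"
        by (simp add: right_diff_distrib)
    qed
    also have "\<dots> = (\<Sum>\<^sub>\<infinity>b\<in>S. c a b * h b) - (\<Sum>\<^sub>\<infinity>b\<in>S. c a b) * h a"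
      using infsum_diff_real[OF ch ca] infsum_cmult_left[OF c_summable] by simp
    also have "\<dots> = 0"
      using infsumI[OF harmonic] by simp
    finally show ?thesis .
  next
    case False
    have "(\<Sum>\<^sub>\<infinity>b\<in>S. ?F b) \<le> (\<Sum>\<^sub>\<infinity>b\<in>S. 0)"
    proof (rule infsum_mono[OF F_summable])
      fix b assume b: "b \<in> S"
      have "min (h b) M - min (h a) M \<le> 0"
        using False by simp
      then show "?F b \<le> 0"
        by (rule mult_nonneg_nonpos[OF c_nonneg[OF b]])
    qed auto
    then show ?thesis
      by simp
  qed
qed

text \<open>The truncation \<open>min h (h x)\<close> is bounded and superharmonic, hence harmonic; at \<open>x\<close> all
  terms of its vanishing outflow are nonpositive, so the one towards \<open>y\<close> vanishes.\<close>

lemma harmonic_le_along_edge: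
  fixes c :: "'a \<Rightarrow> 'a \<Rightarrow> real" and h :: "'a \<Rightarrow> real"
  assumes sym: "\<And>x y. x \<in> S \<Longrightarrow> y \<in> S \<Longrightarrow> c x y = c y x"
    and c_nonneg: "\<And>x y. x \<in> S \<Longrightarrow> y \<in> S \<Longrightarrow> c x y \<ge> 0"
    and c_summable: "(\<lambda>(x, y). c x y) summable_on S \<times> S"
    and h_nonneg: "\<And>x. x \<in> S \<Longrightarrow> h x \<ge> 0"
    and harmonic: "\<And>x. x \<in> S \<Longrightarrow> ((\<lambda>y. c x y * h y) has_sum (h x * (\<Sum>\<^sub>\<infinity>y\<in>S. c x y))) S"
    and x: "x \<in> S" and y: "y \<in> S" and edge: "c x y > 0"
  shows "h x \<le> h y"
proof -
  define u where "u z = min (h z) (h x)" for z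
  have truncation: "(\<lambda>b. c a b * (u b - u a)) summable_on S"
      "(\<Sum>\<^sub>\<infinity>b\<in>S. c a b * (u b - u a)) \<le> 0" if a: "a \<in> S" for a
    using truncation_superharmonic[where c = c and a = a and h = h and M = "h x",
        OF c_nonneg[OF a] summable_on_SigmaD1[OF c_summable a]
        h_nonneg h_nonneg[OF x] harmonic[OF a] a]
    by (simp_all add: u_def)
  have "(\<Sum>\<^sub>\<infinity>b\<in>S. c x b * (u b - u x)) = 0"
  proof (rule superharmonic_bounded_imp_harmonic[OF sym c_summable _ truncation(2) x])
    show "\<bar>u z\<bar> \<le> h x" if "z \<in> S" for z
      using h_nonneg[OF that] h_nonneg[OF x] by (simp add: u_def)
  qed
  moreover have "c x b * (u b - u x) \<le> 0" if "b \<in> S" for b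
    using mult_nonneg_nonpos[OF c_nonneg[OF x that]] by (simp add: u_def)
  ultimately have "c x y * (u y - u x) = 0"
    using nonneg_infsum_le_0D[of "\<lambda>b. - (c x b * (u b - u x))" S y] y
      summable_on_uminus[THEN iffD2, OF truncation(1)[OF x]] by (simp add: infsum_uminus)
  then show ?thesis
    using edge by (simp add: u_def)
qed

lemma stationary_on_if_reversible:
  assumes balance: "\<And>x y. x \<in> S \<Longrightarrow> y \<in> S \<Longrightarrow> p x * r x y = p y * r y x"
    and out_summable: "\<And>x. x \<in> S \<Longrightarrow> r x summable_on S - {x}"
  shows "stationary_on S r p"
  unfolding stationary_on_def
proof (intro ballI conjI)
  fix y assume y: "y \<in> S"
  show "r y summable_on S - {y}"
    by (rule out_summable[OF y])
  have "((\<lambda>x. p y * r y x) has_sum (p y * (\<Sum>\<^sub>\<infinity>z\<in>S - {y}. r y z))) (S - {y})"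
    by (rule has_sum_cmult_right, rule has_sum_infsum, rule out_summable[OF y])
  then show "((\<lambda>x. p x * r x y) has_sum (p y * (\<Sum>\<^sub>\<infinity>z\<in>S - {y}. r y z))) (S - {y})"
    by (rule has_sum_cong[THEN iffD1, rotated]) (use balance y in auto)
qed

lemma stationary_on_density_harmonic:
  assumes \<nu>_pos: "\<And>x. x \<in> S \<Longrightarrow> \<nu> x > 0" and r_diag: "\<And>x. r x x = 0"
    and balance: "\<And>x y. x \<in> S \<Longrightarrow> y \<in> S \<Longrightarrow> \<nu> x * r x y = \<nu> y * r y x"
    and stationary: "stationary_on S r p" and y: "y \<in> S"
  shows "((\<lambda>x. \<nu> y * r y x * (p x / \<nu> x)) has_sum (p y / \<nu> y * (\<Sum>\<^sub>\<infinity>x\<in>S. \<nu> y * r y x))) S"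
proof -
  define R where "R = (\<Sum>\<^sub>\<infinity>x\<in>S - {y}. r y x)"
  have "((\<lambda>x. p x * r x y) has_sum (p y * R)) (S - {y})"
    using stationary y by (simp add: stationary_on_def R_def)
  moreover have "p x * r x y = \<nu> y * r y x * (p x / \<nu> x)" if x: "x \<in> S - {y}" for x
  proof -
    have "\<nu> y * r y x * (p x / \<nu> x) = \<nu> x * r x y * (p x / \<nu> x)"
      using balance[of x y] x y by simp
    also have "\<dots> = p x * r x y"
      using \<nu>_pos[of x] x by simp
    finally show ?thesis
      by (rule sym)
  qed
  ultimately have "((\<lambda>x. \<nu> y * r y x * (p x / \<nu> x)) has_sum (p y * R)) (S - {y})"
    using has_sum_cong[of "S - {y}" "\<lambda>x. p x * r x y" "\<lambda>x. \<nu> y * r y x * (p x / \<nu> x)"]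
    by blast
  then have "((\<lambda>x. \<nu> y * r y x * (p x / \<nu> x)) has_sum
      (\<nu> y * r y y * (p y / \<nu> y) + p y * R)) (insert y (S - {y}))"
    by (rule has_sum_insert[rotated]) simp
  moreover have "(\<Sum>\<^sub>\<infinity>x\<in>S. r y x) = R"
    unfolding R_def by (rule infsum_cong_neutral) (auto simp: r_diag)
  ultimately show ?thesis
    using y \<nu>_pos[OF y] by (simp add: r_diag insert_absorb infsum_cmult_right')
qed

lemma stationary_on_unique_if_reversible:
  fixes r :: "'a \<Rightarrow> 'a \<Rightarrow> real"
  assumes \<nu>_pos: "\<And>x. x \<in> S \<Longrightarrow> \<nu> x > 0" and \<nu>_sum: "(\<nu> has_sum 1) S"
    and r_nonneg: "\<And>x y. r x y \<ge> 0" and r_diag: "\<And>x. r x x = 0"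
    and balance: "\<And>x y. x \<in> S \<Longrightarrow> y \<in> S \<Longrightarrow> \<nu> x * r x y = \<nu> y * r y x"
    and flux_summable: "(\<lambda>(x, y). \<nu> x * r x y) summable_on S \<times> S"
    and reach: "\<And>x. x \<in> S \<Longrightarrow> (\<lambda>a b. a \<in> S \<and> b \<in> S \<and> r a b > 0)\<^sup>*\<^sup>* x z"
    and z: "z \<in> S"
    and p_dist: "prob_dist_on S p" and p_stationary: "stationary_on S r p"
  shows "\<forall>x\<in>S. p x = \<nu> x"
proof -
  define h where "h x = p x / \<nu> x" for x
  define c where "c x y = \<nu> x * r x y" for x y
  have c_sym: "c x y = c y x" if "x \<in> S" "y \<in> S" for x y
    using balance[OF that] by (simp add: c_def)
  have c_nonneg: "c x y \<ge> 0" if "x \<in> S" "y \<in> S" for x y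
    using \<nu>_pos[OF that(1)] r_nonneg[of x y] by (simp add: c_def)
  have h_nonneg: "h x \<ge> 0" if "x \<in> S" for x
    using p_dist \<nu>_pos[OF that] that by (simp add: h_def prob_dist_on_def)
  have harmonic: "((\<lambda>x. c y x * h x) has_sum (h y * (\<Sum>\<^sub>\<infinity>x\<in>S. c y x))) S" if "y \<in> S" for y
    using stationary_on_density_harmonic[OF \<nu>_pos r_diag balance p_stationary that]
    by (simp add: c_def h_def)
  have c_summable: "(\<lambda>(x, y). c x y) summable_on S \<times> S"
    using flux_summable by (simp add: c_def)
  have le: "h x \<le> h y" if "x \<in> S" "y \<in> S" "c x y > 0" for x y
    using harmonic_le_along_edge[where S = S and c = c and h = h and x = x and y = y]
      c_sym c_nonneg c_summable h_nonneg harmonic that by blast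
  have edge: "h a = h b" if "a \<in> S" "b \<in> S" "r a b > 0" for a b
  proof -
    have "c a b > 0"
      using that \<nu>_pos[OF that(1)] by (simp add: c_def)
    moreover from this have "c b a > 0"
      using c_sym[OF that(1,2)] by simp
    ultimately show ?thesis
      using le[of a b] le[of b a] that(1,2) by fastforce
  qed
  have h_const: "h x = h z" if "x \<in> S" for x
    using reach[OF that]
  proof (induction rule: converse_rtranclp_induct)
    case (step a b)
    then show ?case
      using edge[of a b] by simp
  qed simp
  have p_eq: "p x = h z * \<nu> x" if "x \<in> S" for x
    using h_const[OF that] \<nu>_pos[OF that] by (simp add: h_def field_simps)
  have "(p has_sum h z) S"
    using has_sum_cmult_right[OF \<nu>_sum, of "h z"] p_eq has_sum_cong[of S "\<lambda>x. h z * \<nu> x" p]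
    by simp
  then have "h z = 1"
    using p_dist has_sum_unique by (auto simp: prob_dist_on_def)
  then show ?thesis
    using p_eq by simp
qed

section \<open>Configurations\<close>

definition pos_minus_sites :: "(int \<Rightarrow> int) \<Rightarrow> int set" where
  "pos_minus_sites \<sigma> = {i. i \<ge> 1 \<and> \<sigma> i = -1}"

definition nonpos_plus_sites :: "(int \<Rightarrow> int) \<Rightarrow> int set" where
  "nonpos_plus_sites \<sigma> = {i. i \<le> 0 \<and> \<sigma> i = 1}"

definition displacement :: "(int \<Rightarrow> int) \<Rightarrow> int" where
  "displacement \<sigma> = (\<Sum>i\<in>pos_minus_sites \<sigma>. i) + (\<Sum>i\<in>nonpos_plus_sites \<sigma>. - i)"

definition step_config :: "int \<Rightarrow> int \<Rightarrow> int" where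
  "step_config m = (\<lambda>i. if i \<le> m then -1 else 1)"

lemma Bset_spin: "x \<in> Bset \<Longrightarrow> x i = -1 \<or> x i = 1"
  by (auto simp: Bset_def spin_configs_def)

lemma Bset_tails:
  assumes "x \<in> Bset"
  obtains a b where "\<And>j. j < a \<Longrightarrow> x j = -1" "\<And>j. j > b \<Longrightarrow> x j = 1"
proof -
  obtain a b where ab: "\<forall>i::nat. i \<ge> 1 \<longrightarrow> x (a - int i) = -1 \<and> x (b + int i) = 1"
    using assms by (auto simp: Bset_def)
  have "x j = -1" if "j < a" for j
    using ab[rule_format, of "nat (a - j)"] that by auto
  moreover have "x j = 1" if "j > b" for j
    using ab[rule_format, of "nat (j - b)"] that by auto
  ultimately show ?thesis
    using that by blast
qed

lemma finite_pos_minus_sites: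
  assumes "x \<in> Bset"
  shows "finite (pos_minus_sites x)"
proof -
  obtain b where b: "\<And>j. j > b \<Longrightarrow> x j = 1"
    using Bset_tails[OF assms] by metis
  have "pos_minus_sites x \<subseteq> {1..b}"
  proof
    fix i assume "i \<in> pos_minus_sites x"
    then have "i \<ge> 1" "x i = -1"
      by (auto simp: pos_minus_sites_def)
    then show "i \<in> {1..b}"
      using b[of i] by force
  qed
  then show ?thesis
    by (rule finite_subset) simp
qed

lemma finite_nonpos_plus_sites:
  assumes "x \<in> Bset"
  shows "finite (nonpos_plus_sites x)"
proof -
  obtain a where a: "\<And>j. j < a \<Longrightarrow> x j = -1"
    using Bset_tails[OF assms] by metis
  have "nonpos_plus_sites x \<subseteq> {a..0}"
  proof
    fix i assume "i \<in> nonpos_plus_sites x"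
    then have "i \<le> 0" "x i = 1"
      by (auto simp: nonpos_plus_sites_def)
    then show "i \<in> {a..0}"
      using a[of i] by force
  qed
  then show ?thesis
    by (rule finite_subset) simp
qed

lemma Ncount_eq_card:
  "Ncount x = int (card (pos_minus_sites x)) - int (card (nonpos_plus_sites x))"
  by (simp add: Ncount_def pos_minus_sites_def nonpos_plus_sites_def)

lemma displacement_nonneg: "displacement x \<ge> 0"
  unfolding displacement_def
  by (intro add_nonneg_nonneg sum_nonneg) (auto simp: pos_minus_sites_def nonpos_plus_sites_def)

lemma plus_site_lower_bound:
  assumes "x \<in> Bset" "x k = 1"
  shows "- (\<Sum>i\<in>nonpos_plus_sites x. - i) \<le> k"
proof (cases "k \<ge> 1")
  case True
  have "(\<Sum>i\<in>nonpos_plus_sites x. - i) \<ge> 0"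
    by (rule sum_nonneg) (simp add: nonpos_plus_sites_def)
  with True show ?thesis by linarith
next
  case False
  then have "k \<in> nonpos_plus_sites x"
    using assms(2) by (simp add: nonpos_plus_sites_def)
  then have "- k \<le> (\<Sum>i\<in>nonpos_plus_sites x. - i)"
    by (rule member_le_sum[OF _ _ finite_nonpos_plus_sites[OF assms(1)]])
      (simp add: nonpos_plus_sites_def)
  then show ?thesis by linarith
qed

lemma minus_site_upper_bound:
  assumes "x \<in> Bset" "x l = -1"
  shows "l \<le> (\<Sum>i\<in>pos_minus_sites x. i)"
proof (cases "l \<le> 0")
  case True
  have "(\<Sum>i\<in>pos_minus_sites x. i) \<ge> 0"
    by (rule sum_nonneg) (simp add: pos_minus_sites_def)
  with True show ?thesis by linarith
next
  case False
  then have "l \<in> pos_minus_sites x"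
    using assms(2) by (simp add: pos_minus_sites_def)
  then show ?thesis
    by (rule member_le_sum[OF _ _ finite_pos_minus_sites[OF assms(1)]])
      (simp add: pos_minus_sites_def)
qed

lemma f_c_eq_displacement:
  assumes x: "x \<in> Bset"
  shows "f_c c x = 2 * real_of_int (displacement x) - 2 * c * real_of_int (Ncount x)"
proof -
  have A: "(\<Sum>\<^sub>\<infinity>i\<in>{1..}. (real_of_int i - c) * (if x i = -1 then 1 else 0)) =
      (\<Sum>\<^sub>\<infinity>i\<in>pos_minus_sites x. real_of_int i - c)"
    by (rule infsum_cong_neutral) (auto simp: pos_minus_sites_def)
  have B: "(\<Sum>\<^sub>\<infinity>i\<in>{..0}. (real_of_int i - c) * (if x i = 1 then 1 else 0)) =
      (\<Sum>\<^sub>\<infinity>i\<in>nonpos_plus_sites x. real_of_int i - c)"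
    by (rule infsum_cong_neutral) (auto simp: nonpos_plus_sites_def)
  show ?thesis
    using finite_pos_minus_sites[OF x] finite_nonpos_plus_sites[OF x]
    unfolding f_c_def A B displacement_def Ncount_eq_card
    by (simp add: sum_subtractf sum_negf algebra_simps)
qed

lemma step_config_in_Bset: "step_config m \<in> Bset"
proof -
  have "step_config m \<in> spin_configs"
    by (auto simp: spin_configs_def step_config_def)
  moreover have "\<forall>i::nat. i \<ge> 1 \<longrightarrow> step_config m (m - int i) = -1 \<and> step_config m (m + int i) = 1"
    by (auto simp: step_config_def)
  ultimately show ?thesis
    unfolding Bset_def by blast
qed

lemma Ncount_step_config: "Ncount (step_config m) = m"
proof -
  have "pos_minus_sites (step_config m) = {1..m}" "nonpos_plus_sites (step_config m) = {m + 1..0}"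
    by (auto simp: pos_minus_sites_def nonpos_plus_sites_def step_config_def)
  then show ?thesis
    by (simp add: Ncount_eq_card)
qed

lemma step_config_in_Bn: "step_config n \<in> Bn n"
  by (simp add: Bn_def step_config_in_Bset Ncount_step_config)

lemma Bset_sorted_imp_step_config:
  assumes x: "x \<in> Bset" and sorted: "\<And>k l. x k = 1 \<Longrightarrow> x l = -1 \<Longrightarrow> l < k"
  shows "\<exists>m. x = step_config m"
proof -
  obtain a b where a: "\<And>j. j < a \<Longrightarrow> x j = -1" and b: "\<And>j. j > b \<Longrightarrow> x j = 1"
    using Bset_tails[OF x] by blast
  define M where "M = {j. x j = -1} \<inter> {a - 1..b}"
  have M: "finite M" "a - 1 \<in> M"
    using a[of "a - 1"] b[of "a - 1"] by (force simp: M_def)+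
  then have "Max M \<in> M" and "a - 1 \<le> Max M"
    using Max_in Max_ge by blast+
  then have m: "x (Max M) = -1"
    by (simp add: M_def)
  have m_max: "j \<le> Max M" if "x j = -1" for j
  proof (cases "j < a - 1")
    case False
    moreover have "j \<le> b"
      using b[of j] that by force
    ultimately show ?thesis
      using that Max_ge[OF M(1)] by (simp add: M_def)
  qed (use \<open>a - 1 \<le> Max M\<close> in simp)
  have "x = step_config (Max M)"
  proof
    fix j
    show "x j = step_config (Max M) j"
      using Bset_spin[OF x, of j] m_max[of j] sorted[of j "Max M"] m
      by (auto simp: step_config_def)
  qed
  then show ?thesis ..
qed

lemma swap_spins_in_Bset:
  assumes x: "x \<in> Bset"
  shows "swap_spins x k l \<in> Bset"
proof -
  obtain a b where a: "\<And>j. j < a \<Longrightarrow> x j = -1" and b: "\<And>j. j > b \<Longrightarrow> x j = 1"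
    using Bset_tails[OF x] by blast
  define a' where "a' = min a (min k l)"
  define b' where "b' = max b (max k l)"
  have "swap_spins x k l (a' - int i) = -1 \<and> swap_spins x k l (b' + int i) = 1"
    if "i \<ge> 1" for i :: nat
  proof -
    have "a' - int i < a" "a' - int i \<noteq> k" "a' - int i \<noteq> l"
      and "b' + int i > b" "b' + int i \<noteq> k" "b' + int i \<noteq> l"
      using that by (simp_all add: a'_def b'_def)
    then show ?thesis
      using a b by (simp add: swap_spins_def)
  qed
  moreover have "swap_spins x k l \<in> spin_configs"
    using x by (auto simp: swap_spins_def Bset_def spin_configs_def)
  ultimately show ?thesis
    unfolding Bset_def by blast
qed

lemma swap_spins_apply:
  assumes "x k = 1" "x l = -1"
  shows "k \<noteq> l" "swap_spins x k l k = -1" "swap_spins x k l l = 1"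
    "swap_spins (swap_spins x k l) l k = x"
    "\<And>i. i \<noteq> k \<Longrightarrow> i \<noteq> l \<Longrightarrow> swap_spins x k l i = x i"
  using assms by (auto simp: swap_spins_def fun_eq_iff)

lemma swap_spins_inject:
  assumes "x k = 1" "x l = -1" "x k' = 1" "x l' = -1" "swap_spins x k' l' = swap_spins x k l"
  shows "k' = k \<and> l' = l"
proof -
  have kl: "k \<noteq> l" "k' \<noteq> l'" using assms by auto
  have 1: "swap_spins x k' l' k = -1" using assms(5) kl by (simp add: swap_spins_def)
  have 2: "swap_spins x k' l' l = 1" using assms(5) kl by (simp add: swap_spins_def)
  have "k = k'"
  proof (rule ccontr)
    assume "k \<noteq> k'"
    then show False using 1 assms(1) kl by (cases "k = l'") (simp_all add: swap_spins_def)
  qed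
  moreover have "l = l'"
  proof (rule ccontr)
    assume "l \<noteq> l'"
    then show False using 2 assms(2) kl by (cases "l = k'") (simp_all add: swap_spins_def)
  qed
  ultimately show ?thesis by simp
qed

lemma Ncount_displacement_swap_spins:
  assumes x: "x \<in> Bset" and v: "x k = 1" "x l = -1"
  shows "Ncount (swap_spins x k l) = Ncount x"
    and "displacement (swap_spins x k l) = displacement x + k - l"
proof -
  let ?A = "pos_minus_sites x" and ?B = "nonpos_plus_sites x"
  have kl: "k \<noteq> l"
    using v by auto
  have A: "pos_minus_sites (swap_spins x k l) = (?A - {l}) \<union> ({k} \<inter> {1..})"
    using v by (auto simp: pos_minus_sites_def swap_spins_def)
  have B: "nonpos_plus_sites (swap_spins x k l) = (?B - {k}) \<union> ({l} \<inter> {..0})"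
    using v by (auto simp: nonpos_plus_sites_def swap_spins_def)
  have notin: "k \<notin> ?A" "l \<notin> ?B" and mem: "l \<in> ?A \<longleftrightarrow> l \<ge> 1" "k \<in> ?B \<longleftrightarrow> k \<le> 0"
    using v by (auto simp: pos_minus_sites_def nonpos_plus_sites_def)
  note sumA = sum_Diff_Un_singleton[OF finite_pos_minus_sites[OF x] notin(1) kl,
      where P = "{1..}", folded A]
  note sumB = sum_Diff_Un_singleton[OF finite_nonpos_plus_sites[OF x] notin(2) kl[symmetric],
      where P = "{..0}", folded B]
  show "Ncount (swap_spins x k l) = Ncount x"
    using sumA[of "\<lambda>_. 1::int"] sumB[of "\<lambda>_. 1::int"] mem by (simp add: Ncount_eq_card)
  show "displacement (swap_spins x k l) = displacement x + k - l"
    using sumA[of "\<lambda>i. i"] sumB[of "\<lambda>i. - i"] mem by (simp add: displacement_def)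
qed

lemma inj_on_sites: "inj_on (\<lambda>x. (pos_minus_sites x, nonpos_plus_sites x)) Bset"
proof (rule inj_onI)
  fix x y assume x: "x \<in> Bset" and y: "y \<in> Bset"
    and sites: "(pos_minus_sites x, nonpos_plus_sites x) = (pos_minus_sites y, nonpos_plus_sites y)"
  show "x = y"
  proof
    fix i
    have "x i = -1 \<longleftrightarrow> y i = -1" if "i \<ge> 1"
      using sites that by (auto simp: pos_minus_sites_def set_eq_iff)
    moreover have "x i = 1 \<longleftrightarrow> y i = 1" if "i \<le> 0"
      using sites that by (auto simp: nonpos_plus_sites_def set_eq_iff)
    ultimately show "x i = y i"
      using Bset_spin[OF x, of i] Bset_spin[OF y, of i] by fastforce
  qed
qed

lemma sum_powr_displacement_le:
  assumes X: "finite X" "X \<subseteq> Bset" and q: "0 < q" "q < 1"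
  shows "(\<Sum>x\<in>X. q powr real_of_int (displacement x)) \<le> exp (1 / (1 - q)) * exp (1 / (1 - q))"
proof -
  define sites where "sites x = (pos_minus_sites x, nonpos_plus_sites x)" for x
  define g where "g A B = q powr real_of_int (\<Sum>i\<in>A. i) * q powr real_of_int (\<Sum>i\<in>B. - i)" for A B
  have inj: "inj_on sites X"
    using inj_on_subset[OF inj_on_sites X(2)] by (simp add: sites_def[abs_def])
  have "(\<Sum>x\<in>X. q powr real_of_int (displacement x)) = (\<Sum>x\<in>X. case sites x of (A, B) \<Rightarrow> g A B)"
    by (simp add: sites_def g_def displacement_def powr_add)
  also have "\<dots> = (\<Sum>(A, B)\<in>sites ` X. g A B)"
    using sum.reindex[OF inj, of "\<lambda>(A, B). g A B"] by (simp add: comp_def)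
  also have "\<dots> \<le> (\<Sum>(A, B)\<in>fst ` sites ` X \<times> snd ` sites ` X. g A B)"
    by (rule sum_mono2) (use X subset_fst_snd[of "sites ` X"] in \<open>auto simp: g_def\<close>)
  also have "\<dots> = (\<Sum>A\<in>fst ` sites ` X. q powr real_of_int (\<Sum>i\<in>A. i))
      * (\<Sum>B\<in>snd ` sites ` X. q powr real_of_int (\<Sum>i\<in>B. - i))"
    by (simp add: g_def sum_product sum.cartesian_product case_prod_unfold)
  also have "\<dots> \<le> exp (1 / (1 - q)) * exp (1 / (1 - q))"
  proof (rule mult_mono)
    show "(\<Sum>A\<in>fst ` sites ` X. q powr real_of_int (\<Sum>i\<in>A. i)) \<le> exp (1 / (1 - q))"
      by (rule sum_powr_subset_sums_le[where I = "{1..}" and e = "\<lambda>i. i"])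
        (use X q finite_pos_minus_sites in \<open>auto simp: sites_def, auto simp: pos_minus_sites_def\<close>)
    show "(\<Sum>B\<in>snd ` sites ` X. q powr real_of_int (\<Sum>i\<in>B. - i)) \<le> exp (1 / (1 - q))"
      by (rule sum_powr_subset_sums_le[where I = "{..0}" and e = "\<lambda>i. - i"])
        (use X q finite_nonpos_plus_sites in
          \<open>auto simp: sites_def inj_on_def, auto simp: nonpos_plus_sites_def\<close>)
  qed (auto intro: sum_nonneg)
  finally show ?thesis .
qed

section \<open>Energies and exchange rates\<close>

definition bond_energy :: "(int \<Rightarrow> int \<Rightarrow> real) \<Rightarrow> (int \<Rightarrow> int) \<Rightarrow> int \<Rightarrow> int \<Rightarrow> real" where
  "bond_energy J \<sigma> i j = J i j * (if \<sigma> i \<noteq> \<sigma> j then 1 else 0)"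

definition exchange_energy :: "(int \<Rightarrow> int \<Rightarrow> real) \<Rightarrow> (int \<Rightarrow> int) \<Rightarrow> int \<Rightarrow> int \<Rightarrow> real" where
  "exchange_energy J \<sigma> k l = (\<Sum>\<^sub>\<infinity>i\<in>UNIV - {l, k}.
     J i k * real_of_int (\<sigma> k * \<sigma> i) + J i l * real_of_int (\<sigma> l * \<sigma> i))"

lemma bond_energy_summable:
  assumes "concentrated_on_B J \<beta> q c" "\<sigma> \<in> Bset"
  shows "(\<lambda>(i, j). bond_energy J \<sigma> i j) summable_on UNIV \<times> UNIV"
  using assms by (simp add: concentrated_on_B_def bond_energy_def)

lemma hamiltonian_nonneg:
  assumes "\<forall>i j. J i j \<ge> 0"
  shows "hamiltonian J x \<ge> 0"
  unfolding hamiltonian_def using assms by (auto intro!: infsum_nonneg)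

lemma hamiltonian_eq_iterated:
  assumes "(\<lambda>(i, j). bond_energy J \<sigma> i j) summable_on UNIV \<times> UNIV"
  shows "hamiltonian J \<sigma> = 1/2 * (\<Sum>\<^sub>\<infinity>i. \<Sum>\<^sub>\<infinity>j. bond_energy J \<sigma> i j)"
proof -
  have "hamiltonian J \<sigma> = 1/2 * (\<Sum>\<^sub>\<infinity>(i, j)\<in>UNIV \<times> UNIV. bond_energy J \<sigma> i j)"
    by (simp add: hamiltonian_def bond_energy_def)
  then show ?thesis
    using infsum_Sigma'_banach[OF assms] by simp
qed

lemma bond_energy_swap_spins:
  assumes x: "x \<in> Bset" and v: "x k = 1" "x l = -1"
  shows "bond_energy J (swap_spins x k l) i j - bond_energy J x i j =
    (if (i \<in> {k, l}) = (j \<in> {k, l}) then 0 else J i j * real_of_int (x i * x j))"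
proof -
  have y: "swap_spins x k l a = (if a \<in> {k, l} then - x a else x a)" for a
    using v by (auto simp: swap_spins_def)
  show ?thesis
    using Bset_spin[OF x, of i] Bset_spin[OF x, of j] unfolding bond_energy_def y
    by (cases "i \<in> {k, l}"; cases "j \<in> {k, l}") (auto simp del: insert_iff)
qed

lemma hamiltonian_swap_spins:
  assumes J_sym: "\<forall>i j. J i j = J j i"
    and x: "x \<in> Bset" and v: "x k = 1" "x l = -1"
    and summable: "\<And>\<sigma>. \<sigma> \<in> Bset \<Longrightarrow> (\<lambda>(i, j). bond_energy J \<sigma> i j) summable_on UNIV \<times> UNIV"
  shows "hamiltonian J (swap_spins x k l) = hamiltonian J x + exchange_energy J x k l"
proof -
  define y where "y = swap_spins x k l"
  define D where "D i j = bond_energy J y i j - bond_energy J x i j" for i j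
  have D_eq: "D i j = (if (i \<in> {k, l}) = (j \<in> {k, l}) then 0 else J i j * real_of_int (x i * x j))"
    for i j
    using bond_energy_swap_spins[OF x v] by (simp add: D_def y_def)
  have y: "y \<in> Bset"
    by (simp add: y_def swap_spins_in_Bset x)
  note sx = summable[OF x] and sy = summable[OF y]
  have rows: "bond_energy J \<sigma> i summable_on UNIV" if "\<sigma> \<in> Bset" for \<sigma> i
    by (rule summable_on_SigmaD1[OF summable[OF that]]) simp
  have row_sums: "(\<Sum>\<^sub>\<infinity>j. D i j) = (\<Sum>\<^sub>\<infinity>j. bond_energy J y i j) - (\<Sum>\<^sub>\<infinity>j. bond_energy J x i j)" for i
    using infsum_diff_real[OF rows[OF y, of i] rows[OF x, of i]] by (simp add: D_def)
  have "hamiltonian J y - hamiltonian J x = 1/2 * (\<Sum>\<^sub>\<infinity>i. \<Sum>\<^sub>\<infinity>j. D i j)"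
    using hamiltonian_eq_iterated[OF sx] hamiltonian_eq_iterated[OF sy]
      infsum_diff_real[OF summable_on_Sigma_banach[OF sy] summable_on_Sigma_banach[OF sx]]
    by (simp add: row_sums right_diff_distrib)
  also have "(\<Sum>\<^sub>\<infinity>i. \<Sum>\<^sub>\<infinity>j. D i j) = 2 * (\<Sum>\<^sub>\<infinity>i\<in>UNIV - {k, l}. D i k + D i l)"
  proof (rule infsum_symmetric_cross_kernel)
    show "D i j = D j i" for i j
      using J_sym by (auto simp: D_eq mult.commute)
    show "D i j = 0" if "(i \<in> {k, l}) = (j \<in> {k, l})" for i j
      using that by (simp add: D_eq)
    show "k \<noteq> l"
      using v by auto
    show "D i summable_on UNIV" for i
      using summable_on_diff_real[OF rows[OF y, of i] rows[OF x, of i]]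
      by (simp add: D_def[abs_def])
    show "(\<lambda>i. \<Sum>\<^sub>\<infinity>j. D i j) summable_on UNIV"
      using summable_on_diff_real[OF summable_on_Sigma_banach[OF sy]
          summable_on_Sigma_banach[OF sx]]
      by (simp add: row_sums)
  qed
  also have "(\<Sum>\<^sub>\<infinity>i\<in>UNIV - {k, l}. D i k + D i l) = exchange_energy J x k l"
    unfolding exchange_energy_def
    by (subst insert_commute, rule infsum_cong) (auto simp: D_eq mult.commute)
  finally show ?thesis
    by (simp add: y_def)
qed

lemma exchange_energy_swap_spins:
  assumes "x k = 1" "x l = -1"
  shows "exchange_energy J (swap_spins x k l) l k = - exchange_energy J x k l"
proof -
  have "exchange_energy J (swap_spins x k l) l k = (\<Sum>\<^sub>\<infinity>i\<in>UNIV - {l, k}.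
      - (J i k * real_of_int (x k * x i) + J i l * real_of_int (x l * x i)))"
    unfolding exchange_energy_def
    by (subst insert_commute, rule infsum_cong) (use assms in \<open>auto simp: swap_spins_def\<close>)
  also have "\<dots> = - exchange_energy J x k l"
    unfolding exchange_energy_def by (rule infsum_uminus)
  finally show ?thesis .
qed

lemma gibbs_weight_pos: "q > 0 \<Longrightarrow> gibbs_weight J \<beta> q c x > 0"
  by (simp add: gibbs_weight_def)

lemma gibbs_weight_le:
  assumes "\<forall>i j. J i j \<ge> 0" "\<beta> \<ge> 0"
  shows "gibbs_weight J \<beta> q c x \<le> q powr f_c c x"
proof -
  have "exp (- \<beta> * hamiltonian J x) \<le> 1"
    using hamiltonian_nonneg[OF assms(1), of x] assms(2) by simp
  then show ?thesis
    unfolding gibbs_weight_def using mult_right_mono[of _ 1 "q powr f_c c x"] by simp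
qed

lemma gibbs_weight_swap_spins:
  assumes J_sym: "\<forall>i j. J i j = J j i" and conc: "concentrated_on_B J \<beta> q c"
    and x: "x \<in> Bset" and v: "x k = 1" "x l = -1"
  shows "gibbs_weight J \<beta> q c (swap_spins x k l) =
    gibbs_weight J \<beta> q c x * exp (- \<beta> * exchange_energy J x k l) * q powr (2 * real_of_int (k - l))"
proof -
  have H: "hamiltonian J (swap_spins x k l) = hamiltonian J x + exchange_energy J x k l"
    by (rule hamiltonian_swap_spins[OF J_sym x v bond_energy_summable[OF conc]])
  have f: "f_c c (swap_spins x k l) = f_c c x + 2 * real_of_int (k - l)"
    using Ncount_displacement_swap_spins[OF x v]
    by (simp add: f_c_eq_displacement x swap_spins_in_Bset)
  show ?thesis
    unfolding gibbs_weight_def H f powr_add by (simp add: distrib_left mult_ac flip: exp_add)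
qed

lemma move_rate_eq:
  "move_rate J \<beta> q \<sigma> k l =
     1/2 * q powr (real_of_int (k - l)) * (1 - tanh (\<beta> / 2 * exchange_energy J \<sigma> k l))"
  by (simp add: move_rate_def exchange_energy_def)

lemma move_rate_pos:
  assumes "q > 0"
  shows "move_rate J \<beta> q x k l > 0"
  using assms tanh_real_bounds[of "\<beta> / 2 * exchange_energy J x k l"] by (simp add: move_rate_eq)

lemma move_rate_le:
  assumes "q > 0"
  shows "move_rate J \<beta> q x k l \<le> q powr real_of_int (k - l)"
  using assms tanh_real_bounds[of "\<beta> / 2 * exchange_energy J x k l"]
  by (simp add: move_rate_eq mult_le_cancel_left1)

lemma move_rate_detailed_balance:
  assumes J_sym: "\<forall>i j. J i j = J j i" and conc: "concentrated_on_B J \<beta> q c"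
    and x: "x \<in> Bset" and v: "x k = 1" "x l = -1"
  shows "gibbs_weight J \<beta> q c x * move_rate J \<beta> q x k l =
    gibbs_weight J \<beta> q c (swap_spins x k l) * move_rate J \<beta> q (swap_spins x k l) l k"
proof -
  define t where "t = \<beta> / 2 * exchange_energy J x k l"
  have q: "q powr (2 * real_of_int (k - l)) * q powr real_of_int (l - k) =
      q powr real_of_int (k - l)"
    by (simp add: algebra_simps flip: powr_add)
  have "gibbs_weight J \<beta> q c (swap_spins x k l) * move_rate J \<beta> q (swap_spins x k l) l k =
    gibbs_weight J \<beta> q c x * (1/2) * (q powr (2 * real_of_int (k - l)) * q powr real_of_int (l - k))
      * (exp (- 2 * t) * (1 + tanh t))"
    by (simp add: gibbs_weight_swap_spins[OF J_sym conc x v] move_rate_eq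
        exchange_energy_swap_spins[of x k l, OF v] t_def algebra_simps)
  also have "\<dots> = gibbs_weight J \<beta> q c x * move_rate J \<beta> q x k l"
    by (simp only: q flip: one_minus_tanh_eq) (simp add: move_rate_eq t_def)
  finally show ?thesis ..
qed

lemma kawasaki_rate_swap_spins:
  assumes v: "x k = 1" "x l = -1"
  shows "kawasaki_rate J \<beta> q x (swap_spins x k l) = move_rate J \<beta> q x k l"
proof -
  let ?move = "\<lambda>(k', l'). x k' = 1 \<and> x l' = -1 \<and> swap_spins x k l = swap_spins x k' l'"
  have "(SOME p. ?move p) = (k, l)"
  proof (rule some_equality)
    show "?move (k, l)"
      using v by simp
    show "p = (k, l)" if "?move p" for p
      using that swap_spins_inject[of x k l, OF v] by (cases p) auto
  qed
  moreover have "\<exists>k' l'. x k' = 1 \<and> x l' = -1 \<and> swap_spins x k l = swap_spins x k' l'"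
    using v by blast
  ultimately show ?thesis
    by (simp add: kawasaki_rate_def)
qed

lemma kawasaki_rate_eq_0:
  assumes "\<not> (\<exists>k l. x k = 1 \<and> x l = -1 \<and> y = swap_spins x k l)"
  shows "kawasaki_rate J \<beta> q x y = 0"
  unfolding kawasaki_rate_def by (simp only: if_not_P[OF assms])

lemma kawasaki_rate_nonneg:
  assumes "q > 0"
  shows "kawasaki_rate J \<beta> q x y \<ge> 0"
proof (cases "\<exists>k l. x k = 1 \<and> x l = -1 \<and> y = swap_spins x k l")
  case True
  then obtain k l where "x k = 1" "x l = -1" and "y = swap_spins x k l"
    by blast
  then show ?thesis
    using move_rate_pos[OF assms, of J \<beta> x k l] by (simp add: kawasaki_rate_swap_spins)
qed (simp add: kawasaki_rate_eq_0)

lemma kawasaki_rate_self: "kawasaki_rate J \<beta> q x x = 0"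
proof (rule kawasaki_rate_eq_0)
  show "\<not> (\<exists>k l. x k = 1 \<and> x l = -1 \<and> x = swap_spins x k l)"
  proof
    assume "\<exists>k l. x k = 1 \<and> x l = -1 \<and> x = swap_spins x k l"
    then obtain k l where v: "x k = 1" "x l = -1" and "x = swap_spins x k l"
      by blast
    then have "x k = -1"
      using swap_spins_apply(2)[of x k l, OF v] by simp
    then show False
      using v by simp
  qed
qed

lemma kawasaki_rate_detailed_balance:
  assumes J_sym: "\<forall>i j. J i j = J j i" and conc: "concentrated_on_B J \<beta> q c"
    and x: "x \<in> Bset"
  shows "gibbs_weight J \<beta> q c x * kawasaki_rate J \<beta> q x y =
    gibbs_weight J \<beta> q c y * kawasaki_rate J \<beta> q y x"
proof (cases "\<exists>k l. x k = 1 \<and> x l = -1 \<and> y = swap_spins x k l")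
  case True
  then obtain k l where v: "x k = 1" "x l = -1" and y: "y = swap_spins x k l"
    by blast
  have "y l = 1" "y k = -1" "x = swap_spins y l k"
    using swap_spins_apply[of x k l, OF v] y by auto
  then have "kawasaki_rate J \<beta> q y x = move_rate J \<beta> q y l k"
    using kawasaki_rate_swap_spins[of y l k] by metis
  then show ?thesis
    using move_rate_detailed_balance[OF J_sym conc x v] kawasaki_rate_swap_spins[of x k l, OF v] y
    by simp
next
  case False
  have reverse: "\<not> (\<exists>k l. y k = 1 \<and> y l = -1 \<and> x = swap_spins y k l)"
  proof
    assume "\<exists>k l. y k = 1 \<and> y l = -1 \<and> x = swap_spins y k l"
    then obtain k l where v: "y k = 1" "y l = -1" and "x = swap_spins y k l"
      by blast
    then have "x l = 1" "x k = -1" "y = swap_spins x l k"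
      using swap_spins_apply[of y k l, OF v] by auto
    then show False
      using False by blast
  qed
  then show ?thesis
    using kawasaki_rate_eq_0[OF False] kawasaki_rate_eq_0[OF reverse] by simp
qed

lemma Bn_connected_to_step_config:
  assumes "q > 0" and "x \<in> Bn n"
  shows "(\<lambda>y z. y \<in> Bn n \<and> z \<in> Bn n \<and> kawasaki_rate J \<beta> q y z > 0)\<^sup>*\<^sup>* x (step_config n)"
  using assms(2)
proof (induction "nat (displacement x)" arbitrary: x rule: less_induct)
  case less
  have x: "x \<in> Bset" and N: "Ncount x = n"
    using less.prems by (auto simp: Bn_def)
  show ?case
  proof (cases "\<exists>k l. x k = 1 \<and> x l = -1 \<and> k < l")
    case True
    then obtain k l where v: "x k = 1" "x l = -1" and "k < l"
      by blast
    define y where "y = swap_spins x k l"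
    have "y \<in> Bn n" and "nat (displacement y) < nat (displacement x)"
      using Ncount_displacement_swap_spins[OF x v] swap_spins_in_Bset[OF x] N \<open>k < l\<close>
        displacement_nonneg[of y]
      by (auto simp: y_def Bn_def)
    moreover have "kawasaki_rate J \<beta> q x y > 0"
      using move_rate_pos[OF assms(1)] by (simp add: y_def kawasaki_rate_swap_spins[of x k l, OF v])
    ultimately show ?thesis
      using less by (blast intro: converse_rtranclp_into_rtranclp)
  next
    case False
    then have "\<And>k l. x k = 1 \<Longrightarrow> x l = -1 \<Longrightarrow> l < k"
      by (metis linorder_neqE_linordered_idom minus_equation_iff one_neq_neg_one)
    then obtain m where "x = step_config m"
      using Bset_sorted_imp_step_config[OF x] by blast
    moreover have "m = n"
      using N Ncount_step_config \<open>x = step_config m\<close> by simp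
    ultimately show ?thesis
      by simp
  qed
qed

section \<open>Finiteness of the exit rates and of the total flux\<close>

lemma sum_kawasaki_rate_eq_sum_move_rate:
  assumes "finite Y"
  obtains P where "finite P" "P \<subseteq> {(k, l). x k = 1 \<and> x l = -1}"
    "(\<Sum>y\<in>Y. kawasaki_rate J \<beta> q x y) = (\<Sum>(k, l)\<in>P. move_rate J \<beta> q x k l)"
proof
  define sw where "sw = (\<lambda>(k, l). swap_spins x k l)"
  define P where "P = {(k, l). x k = 1 \<and> x l = -1 \<and> swap_spins x k l \<in> Y}"
  show "P \<subseteq> {(k, l). x k = 1 \<and> x l = -1}"
    by (auto simp: P_def)
  have inj: "inj_on sw P"
    by (rule inj_onI) (auto simp: P_def sw_def dest: swap_spins_inject)
  have image: "sw ` P \<subseteq> Y"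
    by (auto simp: P_def sw_def)
  then show "finite P"
    using finite_imageD[OF _ inj] finite_subset assms by blast
  have "(\<Sum>y\<in>Y. kawasaki_rate J \<beta> q x y) = (\<Sum>y\<in>sw ` P. kawasaki_rate J \<beta> q x y)"
  proof (rule sum.mono_neutral_right[OF assms image])
    show "\<forall>y\<in>Y - sw ` P. kawasaki_rate J \<beta> q x y = 0"
      by (auto simp: P_def sw_def image_iff intro!: kawasaki_rate_eq_0)
  qed
  also have "\<dots> = (\<Sum>p\<in>P. kawasaki_rate J \<beta> q x (sw p))"
    by (simp add: sum.reindex[OF inj])
  also have "\<dots> = (\<Sum>(k, l)\<in>P. move_rate J \<beta> q x k l)"
    by (rule sum.cong) (auto simp: P_def sw_def kawasaki_rate_swap_spins)
  finally show "(\<Sum>y\<in>Y. kawasaki_rate J \<beta> q x y) = (\<Sum>(k, l)\<in>P. move_rate J \<beta> q x k l)" .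
qed

text \<open>The sum factorises over \<open>k\<close> and \<open>l\<close>, and both ranges are bounded in terms of the
  displacement.\<close>

lemma sum_moves_powr_le:
  assumes x: "x \<in> Bset" and q: "0 < q" "q < 1"
    and P: "finite P" "P \<subseteq> {(k, l). x k = 1 \<and> x l = -1}"
  shows "(\<Sum>(k, l)\<in>P. q powr real_of_int (k - l))
    \<le> q powr - real_of_int (displacement x) / (1 - q)\<^sup>2"
proof -
  let ?a = "- (\<Sum>i\<in>nonpos_plus_sites x. - i)" and ?b = "- (\<Sum>i\<in>pos_minus_sites x. i)"
  have "(\<Sum>(k, l)\<in>P. q powr real_of_int (k - l))
      \<le> (\<Sum>(k, l)\<in>fst ` P \<times> snd ` P. q powr real_of_int (k - l))"
    by (rule sum_mono2) (use P subset_fst_snd[of P] in auto)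
  also have "\<dots> = (\<Sum>k\<in>fst ` P. q powr real_of_int k) * (\<Sum>l\<in>uminus ` snd ` P. q powr real_of_int l)"
    by (simp add: sum_product sum.cartesian_product sum.reindex case_prod_unfold flip: powr_add)
  also have "\<dots> \<le> (q powr real_of_int ?a / (1 - q)) * (q powr real_of_int ?b / (1 - q))"
  proof (rule mult_mono)
    show "(\<Sum>k\<in>fst ` P. q powr real_of_int k) \<le> q powr real_of_int ?a / (1 - q)"
      by (rule sum_powr_int_le) (use P q plus_site_lower_bound[OF x] in auto)
    show "(\<Sum>l\<in>uminus ` snd ` P. q powr real_of_int l) \<le> q powr real_of_int ?b / (1 - q)"
      by (rule sum_powr_int_le) (use P q minus_site_upper_bound[OF x] in force)+
  qed (use q in \<open>auto intro: sum_nonneg\<close>)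
  also have "\<dots> = q powr - real_of_int (displacement x) / (1 - q)\<^sup>2"
    using q by (simp add: displacement_def power2_eq_square algebra_simps flip: powr_add)
  finally show ?thesis .
qed

lemma sum_kawasaki_rate_le:
  assumes x: "x \<in> Bset" and q: "0 < q" "q < 1" and Y: "finite Y"
  shows "(\<Sum>y\<in>Y. kawasaki_rate J \<beta> q x y) \<le> q powr - real_of_int (displacement x) / (1 - q)\<^sup>2"
proof -
  obtain P where P: "finite P" "P \<subseteq> {(k, l). x k = 1 \<and> x l = -1}"
    and sum_eq: "(\<Sum>y\<in>Y. kawasaki_rate J \<beta> q x y) = (\<Sum>(k, l)\<in>P. move_rate J \<beta> q x k l)"
    using sum_kawasaki_rate_eq_sum_move_rate[OF Y] .
  have "(\<Sum>(k, l)\<in>P. move_rate J \<beta> q x k l) \<le> (\<Sum>(k, l)\<in>P. q powr real_of_int (k - l))"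
    by (rule sum_mono) (use move_rate_le[OF q(1)] in auto)
  then show ?thesis
    using sum_moves_powr_le[OF x q P] sum_eq by linarith
qed

lemma kawasaki_rate_summable_on:
  assumes "x \<in> Bset" "0 < q" "q < 1"
  shows "kawasaki_rate J \<beta> q x summable_on A"
proof (rule nonneg_bdd_above_summable_on)
  show "bdd_above (sum (kawasaki_rate J \<beta> q x) ` {F. F \<subseteq> A \<and> finite F})"
    by (rule bdd_aboveI2[where M = "q powr - real_of_int (displacement x) / (1 - q)\<^sup>2"])
      (use sum_kawasaki_rate_le[OF assms] in auto)
qed (use kawasaki_rate_nonneg[OF assms(2)] in auto)

lemma gibbs_weight_outflow_le:
  assumes J_nonneg: "\<forall>i j. J i j \<ge> 0" and \<beta>: "\<beta> \<ge> 0" and q: "0 < q" "q < 1"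
    and x: "x \<in> Bn n" and Y: "finite Y"
  shows "gibbs_weight J \<beta> q c x * (\<Sum>y\<in>Y. kawasaki_rate J \<beta> q x y)
    \<le> q powr (- 2 * c * real_of_int n) / (1 - q)\<^sup>2 * q powr real_of_int (displacement x)"
proof -
  have xB: "x \<in> Bset" and "Ncount x = n"
    using x by (auto simp: Bn_def)
  then have f: "f_c c x = 2 * real_of_int (displacement x) - 2 * c * real_of_int n"
    by (simp add: f_c_eq_displacement)
  have "gibbs_weight J \<beta> q c x * (\<Sum>y\<in>Y. kawasaki_rate J \<beta> q x y)
      \<le> q powr f_c c x * (q powr - real_of_int (displacement x) / (1 - q)\<^sup>2)"
    by (rule mult_mono[OF gibbs_weight_le[OF J_nonneg \<beta>] sum_kawasaki_rate_le[OF xB q Y]])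
      (auto intro: sum_nonneg kawasaki_rate_nonneg q)
  also have "\<dots> = q powr (- 2 * c * real_of_int n) / (1 - q)\<^sup>2 * q powr real_of_int (displacement x)"
    by (simp add: f algebra_simps flip: powr_add)
  finally show ?thesis .
qed

lemma gibbs_flux_summable:
  assumes J_nonneg: "\<forall>i j. J i j \<ge> 0" and \<beta>: "\<beta> \<ge> 0" and q: "0 < q" "q < 1"
  shows "(\<lambda>(x, y). gibbs_weight J \<beta> q c x * kawasaki_rate J \<beta> q x y) summable_on Bn n \<times> Bn n"
    (is "?flux summable_on _")
proof (rule nonneg_bdd_above_summable_on)
  define K where "K = q powr (- 2 * c * real_of_int n) / (1 - q)\<^sup>2"
  let ?bound = "K * (exp (1 / (1 - q)) * exp (1 / (1 - q)))"
  show "bdd_above (sum ?flux ` {F. F \<subseteq> Bn n \<times> Bn n \<and> finite F})"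
  proof (rule bdd_aboveI2[where M = ?bound])
    fix P assume "P \<in> {F. F \<subseteq> Bn n \<times> Bn n \<and> finite F}"
    then have P: "P \<subseteq> Bn n \<times> Bn n" "finite P"
      by auto
    have "sum ?flux P \<le> sum ?flux (fst ` P \<times> snd ` P)"
      by (rule sum_mono2) (use P subset_fst_snd[of P] in \<open>auto intro!: mult_nonneg_nonneg
          less_imp_le[OF gibbs_weight_pos[OF q(1)]] kawasaki_rate_nonneg[OF q(1)]\<close>)
    also have "\<dots> = (\<Sum>x\<in>fst ` P. gibbs_weight J \<beta> q c x * (\<Sum>y\<in>snd ` P. kawasaki_rate J \<beta> q x y))"
      by (simp add: sum.cartesian_product[symmetric] sum_distrib_left)
    also have "\<dots> \<le> (\<Sum>x\<in>fst ` P. K * q powr real_of_int (displacement x))"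
      by (rule sum_mono) (use P gibbs_weight_outflow_le[OF J_nonneg \<beta> q] in \<open>auto simp: K_def\<close>)
    also have "\<dots> \<le> ?bound"
      unfolding sum_distrib_left[symmetric]
      by (rule mult_left_mono[OF sum_powr_displacement_le]) (use P q in \<open>auto simp: K_def Bn_def\<close>)
    finally show "sum ?flux P \<le> ?bound" .
  qed
qed (auto intro!: mult_nonneg_nonneg less_imp_le[OF gibbs_weight_pos[OF q(1)]]
    kawasaki_rate_nonneg[OF q(1)])

section \<open>The conditioned Gibbs measure\<close>

lemma mu_summable_on_Bn:
  assumes "concentrated_on_B J \<beta> q c"
  shows "mu J \<beta> q c summable_on Bn n"
proof -
  let ?Z = "\<Sum>\<^sub>\<infinity>\<tau>\<in>Bset. gibbs_weight J \<beta> q c \<tau>"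
  have "(\<lambda>x. gibbs_weight J \<beta> q c x * (1 / ?Z)) summable_on Bset"
    using assms by (intro summable_on_cmult_left) (simp add: concentrated_on_B_def)
  then have "(\<lambda>x. gibbs_weight J \<beta> q c x * (1 / ?Z)) summable_on Bn n"
    by (rule summable_on_subset_banach) (auto simp: Bn_def)
  then show ?thesis
    by (rule summable_on_cong[THEN iffD1, rotated]) (simp add: mu_def Bn_def)
qed

lemma infsum_mu_Bn_pos:
  assumes "concentrated_on_B J \<beta> q c" "q > 0"
  shows "(\<Sum>\<^sub>\<infinity>\<tau>\<in>Bn n. mu J \<beta> q c \<tau>) > 0"
proof (rule has_sum_strict_mono[OF has_sum_0 has_sum_infsum[OF mu_summable_on_Bn[OF assms(1)]]])
  show "0 \<le> mu J \<beta> q c x" if "x \<in> Bn n" for x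
    using assms gibbs_weight_pos[OF assms(2)]
    by (simp add: mu_def concentrated_on_B_def less_imp_le)
  show "0 < mu J \<beta> q c (step_config n)"
    using assms gibbs_weight_pos[OF assms(2)] step_config_in_Bset
    by (simp add: mu_def concentrated_on_B_def)
qed (simp_all add: step_config_in_Bn)

lemma nu_eq_scaled_gibbs_weight:
  fixes n :: int
  assumes "concentrated_on_B J \<beta> q c" "q > 0"
  obtains C where "C > 0" "\<And>x. x \<in> Bn n \<Longrightarrow> nu J \<beta> q c n x = C * gibbs_weight J \<beta> q c x"
proof
  let ?Z = "\<Sum>\<^sub>\<infinity>\<tau>\<in>Bset. gibbs_weight J \<beta> q c \<tau>" and ?Zn = "\<Sum>\<^sub>\<infinity>\<tau>\<in>Bn n. mu J \<beta> q c \<tau>"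
  show "1 / (?Z * ?Zn) > 0"
    using assms infsum_mu_Bn_pos[OF assms] by (simp add: concentrated_on_B_def)
  show "nu J \<beta> q c n x = 1 / (?Z * ?Zn) * gibbs_weight J \<beta> q c x" if "x \<in> Bn n" for x
    using that by (simp add: nu_def mu_def Bn_def)
qed

lemma nu_has_sum:
  assumes "concentrated_on_B J \<beta> q c" "q > 0"
  shows "(nu J \<beta> q c n has_sum 1) (Bn n)"
proof -
  let ?Zn = "\<Sum>\<^sub>\<infinity>\<tau>\<in>Bn n. mu J \<beta> q c \<tau>"
  have "((\<lambda>x. mu J \<beta> q c x * (1 / ?Zn)) has_sum (?Zn * (1 / ?Zn))) (Bn n)"
    by (rule has_sum_cmult_left[OF has_sum_infsum[OF mu_summable_on_Bn[OF assms(1)]]])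
  moreover have "?Zn \<noteq> 0"
    using infsum_mu_Bn_pos[OF assms, of n] by linarith
  ultimately have "((\<lambda>x. mu J \<beta> q c x * (1 / ?Zn)) has_sum 1) (Bn n)"
    by simp
  then show ?thesis
    by (rule has_sum_cong[THEN iffD1, rotated]) (simp add: nu_def Bn_def)
qed

lemma nu_pos:
  assumes "concentrated_on_B J \<beta> q c" "q > 0" "x \<in> Bn n"
  shows "nu J \<beta> q c n x > 0"
proof -
  obtain C where "C > 0" "\<And>x. x \<in> Bn n \<Longrightarrow> nu J \<beta> q c n x = C * gibbs_weight J \<beta> q c x"
    using nu_eq_scaled_gibbs_weight[OF assms(1,2)] by blast
  then show ?thesis
    using gibbs_weight_pos[OF assms(2)] assms(3) by simp
qed

lemma nu_detailed_balance:
  assumes "\<forall>i j. J i j = J j i" "concentrated_on_B J \<beta> q c" "q > 0" "x \<in> Bn n" "y \<in> Bn n"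
  shows "nu J \<beta> q c n x * kawasaki_rate J \<beta> q x y = nu J \<beta> q c n y * kawasaki_rate J \<beta> q y x"
proof -
  obtain C where "\<And>x. x \<in> Bn n \<Longrightarrow> nu J \<beta> q c n x = C * gibbs_weight J \<beta> q c x"
    using nu_eq_scaled_gibbs_weight[OF assms(2,3)] by blast
  then show ?thesis
    using kawasaki_rate_detailed_balance[OF assms(1,2), of x y] assms(4,5)
    by (simp add: Bn_def mult.assoc)
qed

lemma nu_flux_summable:
  assumes "\<forall>i j. J i j \<ge> 0" "\<beta> \<ge> 0" "0 < q" "q < 1" "concentrated_on_B J \<beta> q c"
  shows "(\<lambda>(x, y). nu J \<beta> q c n x * kawasaki_rate J \<beta> q x y) summable_on Bn n \<times> Bn n"
proof -
  obtain C where C: "\<And>x. x \<in> Bn n \<Longrightarrow> nu J \<beta> q c n x = C * gibbs_weight J \<beta> q c x"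
    using nu_eq_scaled_gibbs_weight[OF assms(5,3)] by blast
  have "(\<lambda>p. C * (case p of (x, y) \<Rightarrow> gibbs_weight J \<beta> q c x * kawasaki_rate J \<beta> q x y))
      summable_on Bn n \<times> Bn n"
    by (rule summable_on_cmult_right[OF gibbs_flux_summable[OF assms(1-4)]])
  then show ?thesis
    by (rule summable_on_cong[THEN iffD1, rotated]) (auto simp: C mult.assoc)
qed

theorem proposition6p3:
  fixes J :: "int \<Rightarrow> int \<Rightarrow> real" and \<beta> q c :: real and n :: int
  assumes "\<forall>i j. J i j = J j i" and "\<forall>i j. J i j \<ge> 0" and "\<forall>i. J i i = 0"
    and "\<beta> \<ge> 0" and "0 < q" and "q < 1"
    and "concentrated_on_B J \<beta> q c"
  shows "prob_dist_on (Bn n) (nu J \<beta> q c n)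
       \<and> stationary_on (Bn n) (kawasaki_rate J \<beta> q) (nu J \<beta> q c n)
       \<and> (\<forall>p. prob_dist_on (Bn n) p \<and> stationary_on (Bn n) (kawasaki_rate J \<beta> q) p
              \<longrightarrow> (\<forall>\<sigma>\<in>Bn n. p \<sigma> = nu J \<beta> q c n \<sigma>))"
proof -
  note J_sym = assms(1) and J_nonneg = assms(2) and \<beta> = assms(4) and q = assms(5,6)
    and conc = assms(7)
  note \<nu>_pos = nu_pos[OF conc q(1)]
    and balance = nu_detailed_balance[OF J_sym conc q(1)]
  have "prob_dist_on (Bn n) (nu J \<beta> q c n)"
    using \<nu>_pos nu_has_sum[OF conc q(1)] by (simp add: prob_dist_on_def less_imp_le)
  moreover have "stationary_on (Bn n) (kawasaki_rate J \<beta> q) (nu J \<beta> q c n)"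
    by (rule stationary_on_if_reversible[OF balance])
      (use q in \<open>auto simp: Bn_def intro!: kawasaki_rate_summable_on\<close>)
  moreover have "\<forall>\<sigma>\<in>Bn n. p \<sigma> = nu J \<beta> q c n \<sigma>"
    if "prob_dist_on (Bn n) p" "stationary_on (Bn n) (kawasaki_rate J \<beta> q) p" for p
    by (rule stationary_on_unique_if_reversible[OF \<nu>_pos nu_has_sum[OF conc q(1)]
          kawasaki_rate_nonneg[OF q(1)] kawasaki_rate_self balance
          nu_flux_summable[OF J_nonneg \<beta> q conc] Bn_connected_to_step_config[OF q(1)]
          step_config_in_Bn that])
  ultimately show ?thesis
    by blast
qed

end
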